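(* Let $K$ be a finite field of characteristic $p$ and order $q$, let $s$ be a positive integer with $\gcd(s,q-1)=1$, and let $\tau$ be the permutation of $\mathcal{W}_{K,s}$ defined below, of order $m$. Let $A_0,\dots,A_{k-1}$ be distinct elements of $\mathcal{W}_{K,s}$ with $\tau(A_i)=A_{i+1}$ for all $i\in\mathbb{Z}/k\mathbb{Z}$. Then $k\mid m$, and $N_{A_0}=N_{A_1}=\cdots=N_{A_{k-1}}$, and this common value is a multiple of $m/k$.
   Context: $\zeta=\exp(2\pi i/p)$, $\psi(x)=\zeta^{\mathrm{Tr}(x)}$ with $\mathrm{Tr}$ the absolute trace of $K$ to $\mathbb{F}_p$; $W_u=\sum_{x\in K}\psi(x^s-ux)$ for $u\in K$; $\mathcal{W}_{K,s}=\{W_u:u\in K^\times\}$; for $A\in\mathbb{Z}[\zeta]$, $N_A=|\{u\in K^\times: W_u=A\}|$. Let $\gamma$ be a primitive element of $\mathbb{F}_p$ and $\sigma\in\mathrm{Gal}(\mathbb{Q}(\zeta)/\mathbb{Q})$ with $\sigma(\zeta)=\zeta^\gamma$; it is known that $\sigma(W_u)=W_{\gamma^{1-1/s}u}$ for all $u$ (with $1/s$ the inverse of $s$ mod $p-1$), so $\sigma$ restricts to a permutation $\tau$ of $\mathcal{W}_{K,s}$. *)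

theory Defs
  imports "HOL-Analysis.Analysis" "HOL-Number_Theory.Number_Theory"
begin

definition ff_degree :: "'a::{field,finite} itself \<Rightarrow> nat" where
  "ff_degree (_::'a itself) = (THE n. CARD('a) = CHAR('a) ^ n)"

definition abs_trace :: "'a::{field,finite} \<Rightarrow> 'a" where
  "abs_trace x = (\<Sum>i<ff_degree TYPE('a). x ^ (CHAR('a) ^ i))"

definition trace_nat :: "'a::{field,finite} \<Rightarrow> nat" where
  "trace_nat x = (THE k. k < CHAR('a) \<and> of_nat k = abs_trace x)"

definition zeta :: "nat \<Rightarrow> complex" where
  "zeta p = cis (2 * pi / real p)"

definition psi :: "'a::{field,finite} \<Rightarrow> complex" where
  "psi x = zeta CHAR('a) ^ trace_nat x"

definition Wsum :: "nat \<Rightarrow> 'a::{field,finite} \<Rightarrow> complex" where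
  "Wsum s u = (\<Sum>x\<in>UNIV. psi (x ^ s - u * x))"

definition Wset :: "'a::{field,finite} itself \<Rightarrow> nat \<Rightarrow> complex set" where
  "Wset (_::'a itself) s = (Wsum s :: 'a \<Rightarrow> complex) ` (UNIV - {0})"

definition NA :: "'a::{field,finite} itself \<Rightarrow> nat \<Rightarrow> complex \<Rightarrow> nat" where
  "NA (_::'a itself) s A = card {u::'a. u \<noteq> 0 \<and> Wsum s u = A}"

text \<open>The Galois automorphism sigma of Q(zeta_p) with sigma(zeta) = zeta^g, applied to an
  element of Z[zeta] written as an integer combination of powers of zeta.\<close>
definition gal_sigma :: "nat \<Rightarrow> nat \<Rightarrow> complex \<Rightarrow> complex" where
  "gal_sigma p g z = (THE w. \<exists>c::nat \<Rightarrow> int.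
      z = (\<Sum>j<p. of_int (c j) * zeta p ^ j) \<and> w = (\<Sum>j<p. of_int (c j) * zeta p ^ (g * j)))"

definition tau_order :: "'a::{field,finite} itself \<Rightarrow> nat \<Rightarrow> nat \<Rightarrow> nat" where
  "tau_order T s g = (LEAST n. 0 < n \<and>
      (\<forall>A\<in>Wset T s. (gal_sigma CHAR('a) g ^^ n) A = A))"

end

theory Submission
  imports Defs
begin

(* Let gamma be g read in K and choose beta with beta^s = gamma, which exists because
   gcd(s, q - 1) = 1. Since sigma(psi(x)) = psi(gamma x), the substitution x -> beta x gives
   sigma(W_u) = W_(c u) with c = gamma / beta. For sigma to be well defined on Z[zeta] one needs
   the linear independence of 1, zeta, ..., zeta^(p-2), which comes from Eisenstein's criterion
   for Phi_p(x + 1); one also needs the trace to land in F_p.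
   Multiplication by c is then a bijection from the fibre of A onto the fibre of sigma(A), so N
   is constant along tau-orbits. The powers of d = c^k act freely on the fibre of A_0, so
   ord(d) divides N_(A_0), while sigma^(k ord d) fixes every Weil sum, so m divides k ord(d). *)

lemma map_poly_of_int_add:
  "map_poly (of_int :: int \<Rightarrow> 'a::comm_ring_1) (p + q) = map_poly of_int p + map_poly of_int q"
  by (intro poly_eqI) (simp add: coeff_map_poly)

lemma map_poly_of_int_mult:
  "map_poly (of_int :: int \<Rightarrow> 'a::comm_ring_1) (p * q) = map_poly of_int p * map_poly of_int q"
  by (intro poly_eqI) (simp add: coeff_map_poly coeff_mult)

lemma map_poly_of_int_smult:
  "map_poly (of_int :: int \<Rightarrow> 'a::comm_ring_1) (Polynomial.smult c p)
     = Polynomial.smult (of_int c) (map_poly of_int p)"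
  by (intro poly_eqI) (simp add: coeff_map_poly)

lemma poly_map_poly_of_int_sum_monom:
  "poly (map_poly (of_int :: int \<Rightarrow> 'a::comm_ring_1) (\<Sum>j<n. Polynomial.monom (c j) j)) z
     = (\<Sum>j<n. of_int (c j) * z ^ j)"
proof -
  have "map_poly (of_int :: int \<Rightarrow> 'a) (\<Sum>j<n. Polynomial.monom (c j) j)
      = (\<Sum>j<n. Polynomial.monom (of_int (c j)) j)"
    by (intro poly_eqI) (simp add: coeff_map_poly coeff_sum coeff_monom of_int_sum [symmetric]
        del: of_int_sum)
  then show ?thesis by (simp add: poly_sum poly_monom)
qed

lemma zeta_power: "zeta p ^ j = exp (2 * of_real pi * \<i> * of_nat j / of_nat p)"
  unfolding zeta_def Complex.DeMoivre by (simp add: cis_conv_exp field_simps)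

lemma zeta_power_eq_iff: "0 < p \<Longrightarrow> zeta p ^ j = zeta p ^ k \<longleftrightarrow> j mod p = k mod p"
  unfolding zeta_power by (rule complex_root_unity_eq) simp

lemma zeta_power_mod: "0 < p \<Longrightarrow> zeta p ^ (j mod p) = zeta p ^ j"
  by (simp add: zeta_power_eq_iff)

lemma sum_zeta_powers_eq_0:
  assumes "1 < p" "\<not> p dvd g"
  shows "(\<Sum>j<p. zeta p ^ (g * j)) = 0"
proof -
  have "zeta p ^ g \<noteq> 1" "(zeta p ^ g) ^ p = 1"
    using assms zeta_power_eq_iff[of p g 0] zeta_power_eq_iff[of p "g * p" 0]
    by (auto simp flip: power_mult)
  then show ?thesis by (simp add: power_mult sum_gp_strict)
qed

(* For prime p this is the cyclotomic polynomial Phi_p. *)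
definition geom_poly :: "nat \<Rightarrow> int poly" where
  "geom_poly n = (\<Sum>j<n. Polynomial.monom 1 j)"

lemma coeff_geom_poly: "Polynomial.coeff (geom_poly n) i = (if i < n then 1 else 0)"
  by (simp add: geom_poly_def coeff_sum coeff_monom)

lemma degree_geom_poly: "0 < n \<Longrightarrow> degree (geom_poly n) = n - 1"
  by (intro antisym degree_le le_degree) (auto simp: coeff_geom_poly)

lemma geom_poly_nonzero: "0 < n \<Longrightarrow> geom_poly n \<noteq> 0"
  by (metis coeff_geom_poly coeff_0 zero_neq_one)

lemma content_geom_poly: "0 < n \<Longrightarrow> content (geom_poly n) = 1"
  by (metis content_dvd_coeff coeff_geom_poly is_unit_normalize normalize_content)

lemma poly_geom_poly_zeta: "prime p \<Longrightarrow> poly (map_poly of_int (geom_poly p)) (zeta p) = 0"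
  using sum_zeta_powers_eq_0[of p 1] prime_gt_1_nat[of p]
  by (simp add: geom_poly_def poly_map_poly_of_int_sum_monom)

lemma coeff_geom_poly_shift:
  assumes "j < n"
  shows "Polynomial.coeff (pcompose (geom_poly n) [:1, 1:]) j = int (n choose Suc j)"
proof -
  have shift: "[:0, 1:] * pcompose (geom_poly n) [:1, 1:] = [:1, 1:] ^ n - 1"
  proof (rule poly_ext)
    fix x :: int
    show "poly ([:0, 1:] * pcompose (geom_poly n) [:1, 1:]) x = poly ([:1, 1:] ^ n - 1) x"
      using one_diff_power_eq[of "1 + x" n]
      by (simp add: poly_pcompose geom_poly_def poly_sum poly_monom poly_power algebra_simps)
  qed
  have "Polynomial.coeff (pcompose (geom_poly n) [:1, 1:]) j
      = Polynomial.coeff ([:0, 1:] * pcompose (geom_poly n) [:1, 1:]) (Suc j)"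
    by simp
  also have "\<dots> = Polynomial.coeff ([:1, 1:] ^ n) (Suc j)"
    by (simp only: shift coeff_diff) (simp add: coeff_1)
  also have "\<dots> = int (n choose Suc j)"
    using assms by (simp add: coeff_linear_poly_power)
  finally show ?thesis .
qed

lemma eisenstein_constant_factor:
  fixes A B :: "int poly" and p :: int
  assumes "prime p"
    and low: "\<forall>j<degree (A * B). p dvd Polynomial.coeff (A * B) j"
    and lead: "\<not> p dvd lead_coeff (A * B)"
    and "p dvd Polynomial.coeff A 0" "\<not> p dvd Polynomial.coeff B 0"
  shows "degree B = 0"
proof -
  have "A \<noteq> 0" "B \<noteq> 0" using lead by auto
  then have deg: "degree (A * B) = degree A + degree B" by (rule degree_mult_eq)
  have "\<not> p dvd lead_coeff A" using lead by (metis lead_coeff_mult dvd_mult2)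
  define r where "r = (LEAST i. \<not> p dvd Polynomial.coeff A i)"
  have r: "\<not> p dvd Polynomial.coeff A r" "r \<le> degree A"
    using \<open>\<not> p dvd lead_coeff A\<close> unfolding r_def by (fact LeastI, fact Least_le)
  have below_r: "p dvd Polynomial.coeff A i" if "i < r" for i
    using that not_less_Least unfolding r_def by blast
  have "Polynomial.coeff (A * B) r
      = (\<Sum>i<r. Polynomial.coeff A i * Polynomial.coeff B (r - i))
        + Polynomial.coeff A r * Polynomial.coeff B 0"
    by (simp add: coeff_mult lessThan_Suc_atMost [symmetric])
  moreover have "p dvd (\<Sum>i<r. Polynomial.coeff A i * Polynomial.coeff B (r - i))"
    by (intro dvd_sum) (simp add: below_r)
  moreover have "\<not> p dvd Polynomial.coeff A r * Polynomial.coeff B 0"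
    using assms(1,5) r(1) by (simp add: prime_dvd_mult_iff)
  ultimately have "\<not> p dvd Polynomial.coeff (A * B) r" by (simp add: dvd_add_right_iff)
  then have "degree (A * B) \<le> r" using low by (meson not_less)
  then show ?thesis using deg r(2) by simp
qed

lemma eisenstein_factor_degree:
  fixes A B :: "int poly" and p :: int
  assumes "prime p"
    and "\<forall>j<degree (A * B). p dvd Polynomial.coeff (A * B) j"
    and "\<not> p dvd lead_coeff (A * B)"
    and "\<not> p\<^sup>2 dvd Polynomial.coeff (A * B) 0"
  shows "degree A = 0 \<or> degree B = 0"
proof (rule disjCI)
  assume "degree B \<noteq> 0"
  have "A \<noteq> 0" "B \<noteq> 0" using assms(3) by auto
  then have "0 < degree (A * B)" using \<open>degree B \<noteq> 0\<close> by (simp add: degree_mult_eq)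
  then have "p dvd Polynomial.coeff A 0 * Polynomial.coeff B 0"
    using assms(2) by (simp add: coeff_mult_0 [symmetric])
  moreover have "\<not> (p dvd Polynomial.coeff A 0 \<and> p dvd Polynomial.coeff B 0)"
    using assms(4) by (auto simp: coeff_mult_0 power2_eq_square intro: mult_dvd_mono)
  ultimately consider "p dvd Polynomial.coeff A 0" "\<not> p dvd Polynomial.coeff B 0"
    | "p dvd Polynomial.coeff B 0" "\<not> p dvd Polynomial.coeff A 0"
    using assms(1) by (auto simp: prime_dvd_mult_iff)
  then show "degree A = 0"
  proof cases
    case 1
    then have "degree B = 0" using eisenstein_constant_factor assms by blast
    then show ?thesis using \<open>degree B \<noteq> 0\<close> by simp
  next
    case 2
    then show ?thesis using eisenstein_constant_factor[of p B A] assms by (simp add: mult.commute)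
  qed
qed

lemma geom_poly_prime_factor_degree:
  assumes "prime p" "geom_poly p = A * B"
  shows "degree A = 0 \<or> degree B = 0"
proof -
  let ?shift = "\<lambda>f. pcompose f [:1, 1 :: int:]"
  have p: "1 < p" using assms(1) prime_gt_1_nat by blast
  have deg: "degree (?shift (A * B)) = p - 1"
    using p by (simp add: assms(2) [symmetric] degree_pcompose degree_geom_poly)
  have coeff: "Polynomial.coeff (?shift (A * B)) j = int (p choose Suc j)" if "j < p" for j
    using assms(2) coeff_geom_poly_shift[OF that] by simp
  have "degree (?shift A) = 0 \<or> degree (?shift B) = 0"
  proof (rule eisenstein_factor_degree[of "int p"], unfold pcompose_mult [symmetric])
    show "prime (int p)" using assms(1) by simp
    show "\<forall>j<degree (?shift (A * B)). int p dvd Polynomial.coeff (?shift (A * B)) j"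
    proof (intro allI impI)
      fix j assume "j < degree (?shift (A * B))"
      then have "p dvd (p choose Suc j)" using deg assms(1) by (intro dvd_choose_prime) auto
      then show "int p dvd Polynomial.coeff (?shift (A * B)) j"
        using coeff[of j] \<open>j < degree (?shift (A * B))\<close> deg by simp
    qed
    show "\<not> int p dvd lead_coeff (?shift (A * B))"
      using deg coeff[of "p - 1"] p by simp
    show "\<not> (int p)\<^sup>2 dvd Polynomial.coeff (?shift (A * B)) 0"
      using coeff[of 0] p by (simp add: power2_eq_square)
  qed
  then show ?thesis by (simp add: degree_pcompose)
qed

lemma zeta_root_degree:
  assumes "prime p" "f \<noteq> 0" "poly (map_poly of_int f) (zeta p) = 0"
  shows "p - 1 \<le> degree f"
proof -
  let ?root = "\<lambda>g :: int poly. g \<noteq> 0 \<and> poly (map_poly of_int g) (zeta p) = 0"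
  obtain g where g: "g \<noteq> 0" "poly (map_poly of_int g) (zeta p) = 0"
    and g_min: "\<And>h. ?root h \<Longrightarrow> degree g \<le> degree h"
    using ex_has_least_nat[of ?root f degree] assms(2,3) by blast
  have "degree g \<noteq> 0"
  proof
    assume "degree g = 0"
    then obtain c where "g = [:c:]" by (metis degree_eq_zeroE)
    then show False using g by (simp add: map_poly_pCons)
  qed
  obtain a q where "a \<noteq> 0"
    and div: "Polynomial.smult a (geom_poly p) = g * q + pseudo_mod (geom_poly p) g"
    using pseudo_mod(1)[OF g(1)] by blast
  have "pseudo_mod (geom_poly p) g = 0"
  proof (rule ccontr)
    assume "pseudo_mod (geom_poly p) g \<noteq> 0"
    moreover have "poly (map_poly of_int (pseudo_mod (geom_poly p) g)) (zeta p) = 0"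
      using arg_cong[OF div, of "\<lambda>h. poly (map_poly of_int h) (zeta p)"] g(2)
        poly_geom_poly_zeta[OF assms(1)]
      by (simp add: map_poly_of_int_add map_poly_of_int_mult map_poly_of_int_smult)
    ultimately have "degree g \<le> degree (pseudo_mod (geom_poly p) g)" using g_min by blast
    moreover have "degree (pseudo_mod (geom_poly p) g) < degree g"
      using pseudo_mod(2)[OF g(1)] \<open>pseudo_mod (geom_poly p) g \<noteq> 0\<close> by blast
    ultimately show False by simp
  qed
  with div have div: "Polynomial.smult a (geom_poly p) = g * q" by simp
  have "geom_poly p = Polynomial.smult (unit_factor a) (primitive_part g) * primitive_part q"
  proof -
    have "Polynomial.smult (unit_factor a) (geom_poly p) = primitive_part g * primitive_part q"
      using arg_cong[OF div, of primitive_part] assms(1) prime_gt_0_nat[of p]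
      by (simp add: primitive_part_mult primitive_part_smult primitive_part_prim content_geom_poly)
    moreover have "unit_factor a * unit_factor a = 1" using \<open>a \<noteq> 0\<close> by (simp add: sgn_if)
    ultimately show ?thesis by (metis mult_smult_left smult_smult smult_1_left)
  qed
  moreover have "degree (Polynomial.smult (unit_factor a) (primitive_part g)) = degree g"
    using \<open>a \<noteq> 0\<close> by (simp add: degree_primitive_part sgn_if)
  ultimately have "degree g = 0 \<or> degree q = 0"
    using geom_poly_prime_factor_degree[OF assms(1)] by (metis degree_primitive_part)
  moreover have "degree g + degree q = p - 1"
  proof -
    have "q \<noteq> 0"
      using div \<open>a \<noteq> 0\<close> geom_poly_nonzero assms(1) prime_gt_0_nat[of p] by auto
    then have "degree g + degree q = degree (Polynomial.smult a (geom_poly p))"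
      using div g(1) by (simp add: degree_mult_eq)
    also have "\<dots> = p - 1"
      using \<open>a \<noteq> 0\<close> assms(1) prime_gt_0_nat[of p] by (simp add: degree_geom_poly)
    finally show ?thesis .
  qed
  ultimately have "degree g = p - 1" using \<open>degree g \<noteq> 0\<close> by linarith
  then show ?thesis using g_min[of f] assms(2,3) by simp
qed

lemma zeta_sum_eq_0_imp_const:
  assumes "prime p" "(\<Sum>j<p. of_int (e j) * zeta p ^ j) = 0" "j < p"
  shows "e j = e (p - 1)"
proof -
  have p: "1 < p" using assms(1) prime_gt_1_nat by blast
  define f where "f = (\<Sum>i<p. Polynomial.monom (e i - e (p - 1)) i)"
  have coeff_f: "Polynomial.coeff f i = (if i < p then e i - e (p - 1) else 0)" for i
    by (simp add: f_def coeff_sum coeff_monom)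
  have "poly (map_poly of_int f) (zeta p) = (\<Sum>i<p. of_int (e i - e (p - 1)) * zeta p ^ i)"
    unfolding f_def by (rule poly_map_poly_of_int_sum_monom)
  also have "\<dots> = (\<Sum>i<p. of_int (e i) * zeta p ^ i)
      - of_int (e (p - 1)) * (\<Sum>i<p. zeta p ^ (1 * i))"
    by (simp add: left_diff_distrib sum_subtractf sum_distrib_left)
  also have "\<dots> = 0" using assms(2) sum_zeta_powers_eq_0[of p 1] p by simp
  finally have root: "poly (map_poly of_int f) (zeta p) = 0" .
  have "f = 0"
  proof (rule ccontr)
    assume "f \<noteq> 0"
    have "degree f \<le> p - 1" by (rule degree_le) (auto simp: coeff_f)
    moreover have "degree f \<noteq> p - 1"
    proof
      assume "degree f = p - 1"
      then have "lead_coeff f = 0" using coeff_f[of "p - 1"] p by simp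
      then show False using \<open>f \<noteq> 0\<close> by simp
    qed
    ultimately show False using zeta_root_degree[OF assms(1) \<open>f \<noteq> 0\<close> root] by linarith
  qed
  then show ?thesis using coeff_f[of j] assms(3) by simp
qed

lemma gal_sigma_zeta_sum:
  assumes "prime p" "\<not> p dvd g"
  shows "gal_sigma p g (\<Sum>j<p. of_int (c j) * zeta p ^ j)
    = (\<Sum>j<p. of_int (c j) * zeta p ^ (g * j))"
  unfolding gal_sigma_def
proof (rule the_equality)
  fix w
  assume "\<exists>d. (\<Sum>j<p. of_int (c j) * zeta p ^ j) = (\<Sum>j<p. of_int (d j) * zeta p ^ j)
    \<and> w = (\<Sum>j<p. of_int (d j) * zeta p ^ (g * j))"
  then obtain d
    where same: "(\<Sum>j<p. of_int (c j) * zeta p ^ j) = (\<Sum>j<p. of_int (d j) * zeta p ^ j)"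
    and w: "w = (\<Sum>j<p. of_int (d j) * zeta p ^ (g * j))"
    by blast
  have diff: "(\<Sum>j<p. of_int (c j - d j) * zeta p ^ j) = 0"
    using same by (simp add: left_diff_distrib sum_subtractf)
  define e0 where "e0 = c (p - 1) - d (p - 1)"
  have const: "c j - d j = e0" if "j < p" for j
    using zeta_sum_eq_0_imp_const[OF assms(1) diff that] unfolding e0_def .
  have "(\<Sum>j<p. of_int (c j) * zeta p ^ (g * j)) - w
      = (\<Sum>j<p. of_int (c j - d j) * zeta p ^ (g * j))"
    using w by (simp add: left_diff_distrib sum_subtractf)
  also have "\<dots> = of_int e0 * (\<Sum>j<p. zeta p ^ (g * j))"
    by (simp add: const sum_distrib_left)
  also have "\<dots> = 0" using sum_zeta_powers_eq_0 assms prime_gt_1_nat by simp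
  finally show "w = (\<Sum>j<p. of_int (c j) * zeta p ^ (g * j))" by simp
qed (intro exI [of _ c], simp)

lemma sum_zeta_powers_by_residue:
  assumes "0 < p" "finite X"
  shows "(\<Sum>x\<in>X. zeta p ^ (h * T x))
    = (\<Sum>j<p. of_int (int (card {x\<in>X. T x mod p = j})) * zeta p ^ (h * j))"
proof -
  have "(\<Sum>x\<in>X. zeta p ^ (h * T x)) = (\<Sum>x\<in>X. zeta p ^ (h * (T x mod p)))"
    using assms(1) by (intro sum.cong) (simp_all add: zeta_power_eq_iff mod_mult_right_eq)
  also have "\<dots> = (\<Sum>j<p. \<Sum>x\<in>{x\<in>X. T x mod p = j}. zeta p ^ (h * (T x mod p)))"
    using assms by (intro sum.group [symmetric]) auto
  also have "\<dots> = (\<Sum>j<p. of_int (int (card {x\<in>X. T x mod p = j})) * zeta p ^ (h * j))"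
    by (intro sum.cong) simp_all
  finally show ?thesis .
qed

lemma gal_sigma_sum_zeta_powers:
  assumes "prime p" "\<not> p dvd g" "finite X"
  shows "gal_sigma p g (\<Sum>x\<in>X. zeta p ^ T x) = (\<Sum>x\<in>X. zeta p ^ (g * T x))"
proof -
  let ?c = "\<lambda>j. int (card {x\<in>X. T x mod p = j})"
  have "gal_sigma p g (\<Sum>j<p. of_int (?c j) * zeta p ^ j)
      = (\<Sum>j<p. of_int (?c j) * zeta p ^ (g * j))"
    by (rule gal_sigma_zeta_sum[OF assms(1,2)])
  then show ?thesis
    using sum_zeta_powers_by_residue[of p X 1 T] sum_zeta_powers_by_residue[of p X g T]
      assms prime_gt_0_nat[of p] by simp
qed

lemma prime_CHAR_finite_field: "prime CHAR('a::{field,finite})"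
  by (rule prime_CHAR_semidom, rule finite_imp_CHAR_pos) simp

lemma power_card_minus_1_finite_field:
  fixes x :: "'a::{field,finite}"
  assumes "x \<noteq> 0"
  shows "x ^ (CARD('a) - 1) = 1"
proof -
  let ?U = "UNIV - {0 :: 'a}"
  have "x ^ card ?U * (\<Prod>y\<in>?U. y) = (\<Prod>y\<in>?U. x * y)"
    by (simp add: prod.distrib)
  also have "\<dots> = (\<Prod>y\<in>?U. y)"
    by (rule prod.reindex_bij_witness [of _ "\<lambda>y. y / x" "\<lambda>y. x * y"]) (use assms in auto)
  finally show ?thesis by (simp add: card_Diff_singleton)
qed

lemma power_card_finite_field: "(x :: 'a::{field,finite}) ^ CARD('a) = x"
proof -
  obtain n where n: "CARD('a) = Suc n"
    using finite_UNIV_card_ge_0[OF finite_class.finite_UNIV [where 'a = 'a]] gr0_implies_Suc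
    by blast
  show ?thesis
  proof (cases "x = 0")
    case False
    then show ?thesis using power_card_minus_1_finite_field[OF False] n by simp
  qed (simp add: n)
qed

lemma power_mod_eq_if_power_eq_1:
  fixes x :: "'a::monoid_mult"
  assumes "x ^ n = 1"
  shows "x ^ (a mod n) = x ^ a"
proof -
  have "x ^ a = x ^ (n * (a div n) + a mod n)" by simp
  also have "\<dots> = x ^ (a mod n)" unfolding power_add power_mult assms by simp
  finally show ?thesis by (rule sym)
qed

lemma power_cong_finite_field:
  fixes x :: "'a::{field,finite}"
  assumes "x \<noteq> 0" "[a = b] (mod CARD('a) - 1)"
  shows "x ^ a = x ^ b"
proof -
  note power_mod = power_mod_eq_if_power_eq_1[OF power_card_minus_1_finite_field[OF assms(1)]]
  have "x ^ a = x ^ (a mod (CARD('a) - 1))" by (rule power_mod [symmetric])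
  also have "\<dots> = x ^ (b mod (CARD('a) - 1))" using assms(2) by (simp only: cong_def)
  also have "\<dots> = x ^ b" by (rule power_mod)
  finally show ?thesis .
qed

lemma of_nat_power_CHAR_power:
  assumes "prime CHAR('a::comm_semiring_1)"
  shows "(of_nat k :: 'a) ^ (CHAR('a) ^ i) = of_nat k"
  using freshmans_dream_sum'[OF assms refl, of "\<lambda>_. 1" "{..<k}"] by simp

definition add_submonoid :: "'a::monoid_add set \<Rightarrow> bool" where
  "add_submonoid V \<longleftrightarrow> 0 \<in> V \<and> (\<forall>x\<in>V. \<forall>y\<in>V. x + y \<in> V)"

lemma add_submonoid_of_nat_mult:
  fixes V :: "'a::semiring_1 set"
  assumes "add_submonoid V" "x \<in> V"
  shows "of_nat n * x \<in> V"
proof (induction n)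
  case (Suc n)
  then show ?case using assms by (simp add: add_submonoid_def distrib_right)
qed (use assms(1) in \<open>simp add: add_submonoid_def\<close>)

lemma of_nat_mod_CHAR: "(of_nat (n mod CHAR('a)) :: 'a::semiring_1_cancel) = of_nat n"
  by (simp add: of_nat_eq_iff_cong_CHAR cong_def)

lemma add_submonoid_diff:
  fixes V :: "'a::{field,finite} set"
  assumes "add_submonoid V" "x \<in> V" "y \<in> V"
  shows "x - y \<in> V"
proof -
  have "(of_nat (CHAR('a) - 1) :: 'a) = - 1"
    using prime_gt_0_nat[OF prime_CHAR_finite_field [where 'a = 'a]] by (simp add: of_nat_diff)
  then have "x - y = x + of_nat (CHAR('a) - 1) * y" by simp
  moreover have "x + of_nat (CHAR('a) - 1) * y \<in> V"
    using assms add_submonoid_of_nat_mult[OF assms(1,3)] by (simp add: add_submonoid_def)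
  ultimately show ?thesis by (simp only:)
qed

lemma add_submonoid_of_nat_mult_cancel:
  fixes V :: "'a::{field,finite} set"
  assumes "add_submonoid V" "\<not> CHAR('a) dvd n" "of_nat n * v \<in> V"
  shows "v \<in> V"
proof -
  have "coprime n CHAR('a)"
    using assms(2) prime_CHAR_finite_field by (metis coprime_commute prime_imp_coprime_nat)
  then obtain b where "[n * b = Suc 0] (mod CHAR('a))" using cong_solve_coprime_nat by blast
  then have "of_nat (n * b) = (of_nat (Suc 0) :: 'a)" by (simp only: of_nat_eq_iff_cong_CHAR)
  then have "(of_nat b * of_nat n :: 'a) = 1" by (simp add: mult.commute)
  then have v_eq: "v = of_nat b * (of_nat n * v)" by (simp add: mult.assoc [symmetric])
  show ?thesis by (subst v_eq) (rule add_submonoid_of_nat_mult[OF assms(1,3)])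
qed

lemma add_submonoid_extend:
  fixes V :: "'a::{field,finite} set"
  assumes V: "add_submonoid V" and "v \<notin> V"
  defines "V' \<equiv> (\<lambda>(w, a). w + of_nat a * v) ` (V \<times> {..<CHAR('a)})"
  shows "add_submonoid V'" "V \<subset> V'" "card V' = CHAR('a) * card V"
proof -
  let ?p = "CHAR('a)"
  have "0 < ?p" by (rule prime_gt_0_nat [OF prime_CHAR_finite_field])
  have in_V': "w + of_nat a * v \<in> V'" if "w \<in> V" for w a
  proof -
    have "(w, a mod ?p) \<in> V \<times> {..<?p}" using that \<open>0 < ?p\<close> by simp
    then show ?thesis
      unfolding V'_def by (auto simp: of_nat_mod_CHAR intro: image_eqI [of _ _ "(w, a mod ?p)"])
  qed
  show "add_submonoid V'"
    unfolding add_submonoid_def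
  proof (intro conjI ballI)
    show "0 \<in> V'" using in_V'[of 0 0] V by (simp add: add_submonoid_def)
    fix x y assume "x \<in> V'" "y \<in> V'"
    then obtain w a w' a'
      where "w \<in> V" "w' \<in> V" "x = w + of_nat a * v" "y = w' + of_nat a' * v"
      unfolding V'_def by auto
    moreover have "w + w' \<in> V" using V \<open>w \<in> V\<close> \<open>w' \<in> V\<close> by (simp add: add_submonoid_def)
    ultimately show "x + y \<in> V'" using in_V'[of "w + w'" "a + a'"] by (simp add: algebra_simps)
  qed
  have "V \<subseteq> V'" using in_V'[of _ 0] by auto
  moreover have "v \<in> V' - V" using in_V'[of 0 1] V \<open>v \<notin> V\<close> by (simp add: add_submonoid_def)
  ultimately show "V \<subset> V'" by blast
  have no_collision: "w + of_nat a * v \<noteq> w' + of_nat a' * v"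
    if "w \<in> V" "w' \<in> V" "a' < a" "a < ?p" for w w' a a'
  proof
    assume "w + of_nat a * v = w' + of_nat a' * v"
    then have "of_nat (a - a') * v = w' - w"
      using that(3) by (simp add: of_nat_diff algebra_simps)
    then have "of_nat (a - a') * v \<in> V" using add_submonoid_diff[OF V that(2,1)] by simp
    moreover have "\<not> ?p dvd (a - a')" using that(3,4) by (auto dest: dvd_imp_le)
    ultimately have "v \<in> V" using add_submonoid_of_nat_mult_cancel[OF V] by blast
    then show False using \<open>v \<notin> V\<close> by contradiction
  qed
  have "inj_on (\<lambda>(w, a). w + of_nat a * v) (V \<times> {..<?p})"
  proof (rule inj_onI, clarify)
    fix w a w' a'
    assume "w \<in> V" "w' \<in> V" "a < ?p" "a' < ?p"
      and eq: "w + of_nat a * v = w' + of_nat a' * v"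
    have "a = a'"
    proof (cases a a' rule: linorder_cases)
      case less
      then show ?thesis
        using no_collision[OF \<open>w' \<in> V\<close> \<open>w \<in> V\<close> less \<open>a' < ?p\<close>] eq by argo
    next
      case greater
      then show ?thesis
        using no_collision[OF \<open>w \<in> V\<close> \<open>w' \<in> V\<close> greater \<open>a < ?p\<close>] eq by argo
    qed
    then show "w = w' \<and> a = a'" using eq by simp
  qed
  then show "card V' = ?p * card V"
    unfolding V'_def by (simp add: card_image card_cartesian_product)
qed

lemma card_finite_field_CHAR_power: "\<exists>n. CARD('a::{field,finite}) = CHAR('a) ^ n"
proof -
  have "\<exists>n. CARD('a) = CHAR('a) ^ n * card V" if "add_submonoid (V :: 'a set)" for V
    using that
  proof (induction "card (UNIV - V)" arbitrary: V rule: less_induct)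
    case less
    show ?case
    proof (cases "V = UNIV")
      case True
      then show ?thesis by (intro exI [of _ 0]) simp
    next
      case False
      then obtain v where "v \<notin> V" by blast
      define V' where "V' = (\<lambda>(w, a). w + of_nat a * v) ` (V \<times> {..<CHAR('a)})"
      have V': "add_submonoid V'" "V \<subset> V'" "card V' = CHAR('a) * card V"
        using add_submonoid_extend[OF less.prems \<open>v \<notin> V\<close>] unfolding V'_def by blast+
      then have "card (UNIV - V') < card (UNIV - V)" by (intro psubset_card_mono) auto
      then obtain n where "CARD('a) = CHAR('a) ^ n * card V'" using less.hyps V'(1) by blast
      then show ?thesis using V'(3) by (intro exI [of _ "Suc n"]) simp
    qed
  qed
  from this [of "{0}"] show ?thesis by (simp add: add_submonoid_def)
qed

lemma card_finite_field_eq: "CARD('a::{field,finite}) = CHAR('a) ^ ff_degree TYPE('a)"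
proof -
  obtain n where n: "CARD('a) = CHAR('a) ^ n" using card_finite_field_CHAR_power by blast
  have "ff_degree TYPE('a) = n"
    unfolding ff_degree_def
  proof (rule the_equality)
    show "CARD('a) = CHAR('a) ^ n" by (fact n)
    show "m = n" if "CARD('a) = CHAR('a) ^ m" for m
      using that n prime_gt_1_nat[OF prime_CHAR_finite_field [where 'a = 'a]] power_inject_exp
      by metis
  qed
  then show ?thesis using n by simp
qed

lemma CHAR_power_fixed_imp_of_nat:
  fixes y :: "'a::{field,finite}"
  assumes "y ^ CHAR('a) = y"
  shows "\<exists>k<CHAR('a). of_nat k = y"
proof (rule ccontr)
  let ?p = "CHAR('a)"
  assume not_of_nat: "\<not> (\<exists>k<?p. of_nat k = y)"
  have p: "prime ?p" by (rule prime_CHAR_finite_field)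
  define P :: "'a poly" where "P = Polynomial.monom 1 ?p - [:0, 1:]"
  have "Polynomial.coeff P ?p = 1"
    using prime_gt_1_nat[OF p] by (simp add: P_def coeff_monom coeff_pCons split: nat.split)
  then have "P \<noteq> 0" by auto
  have "degree P \<le> ?p"
    unfolding P_def using prime_gt_0_nat[OF p]
    by (intro order.trans [OF degree_diff_le_max]) (simp add: degree_monom_eq)
  have roots: "insert y (of_nat ` {..<?p}) \<subseteq> {x. poly P x = 0}"
    using assms of_nat_power_CHAR_power[OF p, of _ 1] by (auto simp: P_def poly_monom)
  have "inj_on (of_nat :: nat \<Rightarrow> 'a) {..<?p}"
    by (rule inj_onI) (simp add: of_nat_eq_iff_cong_CHAR cong_def)
  then have "card (insert y (of_nat ` {..<?p})) = Suc ?p"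
    using not_of_nat by (subst card_insert_disjoint) (auto simp: card_image)
  moreover have "card (insert y (of_nat ` {..<?p})) \<le> card {x. poly P x = 0}"
    using roots by (intro card_mono) auto
  moreover have "card {x. poly P x = 0} \<le> degree P"
    by (rule card_poly_roots_bound [OF \<open>P \<noteq> 0\<close>])
  ultimately show False using \<open>degree P \<le> ?p\<close> by simp
qed

lemma abs_trace_power_CHAR: "abs_trace (x :: 'a::{field,finite}) ^ CHAR('a) = abs_trace x"
proof -
  let ?p = "CHAR('a)" and ?n = "ff_degree TYPE('a)"
  define f where "f i = x ^ (?p ^ i)" for i
  have "abs_trace x ^ ?p = (\<Sum>i<?n. f i ^ ?p)"
    unfolding abs_trace_def f_def
    by (rule freshmans_dream_sum) (simp_all add: prime_CHAR_finite_field)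
  also have "\<dots> = (\<Sum>i<?n. f (Suc i))"
    by (simp add: f_def power_mult [symmetric] power_Suc mult.commute)
  also have "\<dots> = (\<Sum>i<?n. f i)"
  proof -
    have "f ?n = f 0"
      using power_card_finite_field[of x] card_finite_field_eq[where 'a = 'a] by (simp add: f_def)
    have "f 0 + (\<Sum>i<?n. f (Suc i)) = (\<Sum>i<Suc ?n. f i)"
      by (rule sum.lessThan_Suc_shift [symmetric])
    also have "\<dots> = (\<Sum>i<?n. f i) + f ?n" by (rule sum.lessThan_Suc)
    finally show ?thesis using \<open>f ?n = f 0\<close> by (simp add: add.commute)
  qed
  finally show ?thesis by (simp add: abs_trace_def f_def)
qed

lemma trace_nat_eqI:
  assumes "k < CHAR('a)" "of_nat k = abs_trace (y :: 'a::{field,finite})"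
  shows "trace_nat y = k"
  unfolding trace_nat_def
proof (rule the_equality)
  fix k' assume k': "k' < CHAR('a) \<and> of_nat k' = abs_trace y"
  then have "(of_nat k' :: 'a) = of_nat k" using assms(2) by simp
  then show "k' = k" using k' assms(1) by (auto simp: of_nat_eq_iff_cong_CHAR cong_def)
qed (use assms in simp)

lemma of_nat_trace_nat: "of_nat (trace_nat y) = abs_trace (y :: 'a::{field,finite})"
proof -
  obtain k where "k < CHAR('a)" "of_nat k = abs_trace y"
    using CHAR_power_fixed_imp_of_nat[OF abs_trace_power_CHAR] by blast
  then show ?thesis using trace_nat_eqI by metis
qed

lemma abs_trace_of_nat_mult:
  "abs_trace ((of_nat g :: 'a::{field,finite}) * y) = of_nat g * abs_trace y"
  unfolding abs_trace_def
  by (simp add: power_mult_distrib of_nat_power_CHAR_power prime_CHAR_finite_field sum_distrib_left)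

lemma psi_of_nat_mult:
  "psi ((of_nat g :: 'a::{field,finite}) * y) = zeta CHAR('a) ^ (g * trace_nat y)"
proof -
  have "trace_nat ((of_nat g :: 'a) * y) = (g * trace_nat y) mod CHAR('a)"
  proof (rule trace_nat_eqI)
    show "(g * trace_nat y) mod CHAR('a) < CHAR('a)"
      using prime_gt_0_nat[OF prime_CHAR_finite_field [where 'a = 'a]] by simp
    have "(of_nat ((g * trace_nat y) mod CHAR('a)) :: 'a) = of_nat (g * trace_nat y)"
      by (rule of_nat_mod_CHAR)
    also have "\<dots> = of_nat g * abs_trace y" by (simp add: of_nat_trace_nat)
    also have "\<dots> = abs_trace ((of_nat g :: 'a) * y)" by (simp add: abs_trace_of_nat_mult)
    finally show "of_nat ((g * trace_nat y) mod CHAR('a)) = abs_trace ((of_nat g :: 'a) * y)" .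
  qed
  then show ?thesis
    unfolding psi_def
    using zeta_power_mod prime_gt_0_nat[OF prime_CHAR_finite_field [where 'a = 'a]] by simp
qed

lemma nth_root_finite_field:
  fixes y :: "'a::{field,finite}"
  assumes "coprime s (CARD('a) - 1)" "y \<noteq> 0"
  shows "\<exists>x. x \<noteq> 0 \<and> x ^ s = y"
proof -
  obtain t where t: "[s * t = Suc 0] (mod CARD('a) - 1)"
    using cong_solve_coprime_nat[OF assms(1)] by blast
  have "(y ^ t) ^ s = y ^ Suc 0"
    unfolding power_mult [symmetric] mult.commute [of t]
    by (rule power_cong_finite_field [OF assms(2) t])
  then show ?thesis using assms(2) by (intro exI [of _ "y ^ t"]) simp
qed

lemma Wsum_rescale:
  fixes b u :: "'a::{field,finite}"
  assumes "b \<noteq> 0"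
  shows "(\<Sum>x\<in>UNIV. psi (b ^ s * (x ^ s - u * x))) = Wsum s (b ^ s / b * u)"
  unfolding Wsum_def
proof (rule sum.reindex_bij_witness [of _ "\<lambda>y. y / b" "\<lambda>x. b * x"])
  fix x :: 'a
  show "psi ((b * x) ^ s - b ^ s / b * u * (b * x)) = psi (b ^ s * (x ^ s - u * x))"
    using assms by (simp add: power_mult_distrib algebra_simps)
qed (use assms in auto)

lemma gal_sigma_Wsum:
  fixes s g :: nat
  assumes "coprime s (CARD('a::{field,finite}) - 1)" "coprime CHAR('a) g"
  shows "\<exists>c::'a. c \<noteq> 0 \<and> (\<forall>u. gal_sigma CHAR('a) g (Wsum s u) = Wsum s (c * u))"
proof -
  let ?p = "CHAR('a)"
  have p: "prime ?p" by (rule prime_CHAR_finite_field)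
  have "\<not> ?p dvd g"
  proof
    assume "?p dvd g"
    then have "is_unit ?p" using assms(2) coprime_absorb_left by blast
    then show False using p not_prime_unit by blast
  qed
  then have "(of_nat g :: 'a) \<noteq> 0" by (simp add: of_nat_eq_0_iff_char_dvd)
  then obtain b :: 'a where "b \<noteq> 0" "b ^ s = of_nat g"
    using nth_root_finite_field[OF assms(1)] by blast
  have "gal_sigma ?p g (Wsum s u) = Wsum s (b ^ s / b * u)" for u
  proof -
    have "gal_sigma ?p g (Wsum s u) = (\<Sum>x\<in>UNIV. zeta ?p ^ (g * trace_nat (x ^ s - u * x)))"
      unfolding Wsum_def psi_def
      by (rule gal_sigma_sum_zeta_powers [OF p \<open>\<not> ?p dvd g\<close>]) simp
    also have "\<dots> = (\<Sum>x\<in>UNIV. psi (b ^ s * (x ^ s - u * x)))"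
      by (simp add: \<open>b ^ s = of_nat g\<close> psi_of_nat_mult)
    also have "\<dots> = Wsum s (b ^ s / b * u)" by (rule Wsum_rescale [OF \<open>b \<noteq> 0\<close>])
    finally show ?thesis .
  qed
  then show ?thesis using \<open>b \<noteq> 0\<close> by (intro exI [of _ "b ^ s / b"]) simp
qed

lemma funpow_cyclic_sequence:
  assumes "0 < k" "\<forall>i<k. f (A i) = A ((i + 1) mod k)"
  shows "(f ^^ n) (A 0) = A (n mod k)"
proof (induction n)
  case (Suc n)
  have "(f ^^ Suc n) (A 0) = A ((n mod k + 1) mod k)" using Suc assms by simp
  also have "(n mod k + 1) mod k = Suc n mod k" by (simp add: mod_Suc_eq)
  finally show ?case .
qed simp

lemma funpow_cycle_length_dvd:
  assumes "0 < k" "inj_on (\<lambda>i. (f ^^ i) a) {..<k}" "(f ^^ k) a = a" "(f ^^ n) a = a"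
  shows "k dvd n"
proof -
  have "(f ^^ (n mod k)) a = (f ^^ 0) a" using funpow_mod_eq[of k f a n] assms(3,4) by simp
  then have "n mod k = 0" using inj_onD[OF assms(2)] assms(1) by simp
  then show ?thesis by (simp add: dvd_eq_mod_eq_0)
qed

lemma least_common_period_dvd:
  fixes f :: "'a \<Rightarrow> 'a" and X :: "'a set"
  defines "m \<equiv> LEAST m. 0 < m \<and> (\<forall>x\<in>X. (f ^^ m) x = x)"
  assumes "0 < n" "\<forall>x\<in>X. (f ^^ n) x = x"
  shows "0 < m \<and> (\<forall>x\<in>X. (f ^^ m) x = x)" "m dvd n"
proof -
  show m: "0 < m \<and> (\<forall>x\<in>X. (f ^^ m) x = x)"
    unfolding m_def by (rule LeastI [of _ n]) (use assms in simp)
  have "n mod m = 0"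
  proof (rule ccontr)
    assume "n mod m \<noteq> 0"
    moreover have "\<forall>x\<in>X. (f ^^ (n mod m)) x = x"
      using m assms(3) funpow_mod_eq[of m f] by simp
    ultimately have "m \<le> n mod m" unfolding m_def by (intro Least_le) simp
    moreover have "n mod m < m" using m by simp
    ultimately show False by simp
  qed
  then show "m dvd n" by (simp add: dvd_eq_mod_eq_0)
qed

definition mult_order :: "'a::{field,finite} \<Rightarrow> nat" where
  "mult_order x = (LEAST n. 0 < n \<and> x ^ n = 1)"

lemma mult_order:
  fixes x :: "'a::{field,finite}"
  assumes "x \<noteq> 0"
  shows "0 < mult_order x" "x ^ mult_order x = 1"
proof -
  have "card {0, 1 :: 'a} \<le> CARD('a)" by (rule card_mono) simp_all
  then have "0 < CARD('a) - 1 \<and> x ^ (CARD('a) - 1) = 1"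
    using power_card_minus_1_finite_field[OF assms] by simp
  then have "0 < mult_order x \<and> x ^ mult_order x = 1"
    unfolding mult_order_def by (rule LeastI)
  then show "0 < mult_order x" "x ^ mult_order x = 1" by simp_all
qed

lemma inj_on_power_mult_order:
  fixes x :: "'a::{field,finite}"
  assumes "x \<noteq> 0"
  shows "inj_on (\<lambda>i. x ^ i) {..<mult_order x}"
proof -
  have "x ^ i \<noteq> x ^ j" if "i < j" "j < mult_order x" for i j
  proof
    assume "x ^ i = x ^ j"
    moreover have "x ^ i * x ^ (j - i) = x ^ j" using that(1) by (simp flip: power_add)
    ultimately have "x ^ j * x ^ (j - i) = x ^ j * 1" by simp
    then have "x ^ (j - i) = 1" using assms by simp
    then have "mult_order x \<le> j - i"
      unfolding mult_order_def using that(1) by (intro Least_le) simp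
    then show False using that by simp
  qed
  then show ?thesis
    by (intro inj_onI) (metis lessThan_iff linorder_cases)
qed

lemma mult_order_dvd_card_invariant:
  fixes x :: "'a::{field,finite}"
  assumes "x \<noteq> 0" "0 \<notin> S" "\<forall>y\<in>S. x * y \<in> S"
  shows "mult_order x dvd card S"
  using assms(2,3)
proof (induction "card S" arbitrary: S rule: less_induct)
  case less
  let ?e = "mult_order x"
  obtain e' where e': "?e = Suc e'" using mult_order(1)[OF assms(1)] gr0_implies_Suc by blast
  show ?case
  proof (cases "S = {}")
    case False
    then obtain u where "u \<in> S" by blast
    then have "u \<noteq> 0" using less.prems(1) by blast
    define orbit where "orbit = range (\<lambda>i. x ^ i * u)"
    have "x ^ i * u \<in> S" for i
      by (induction i) (use \<open>u \<in> S\<close> less.prems(2) in \<open>simp_all add: mult.assoc\<close>)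
    then have "orbit \<subseteq> S" unfolding orbit_def by blast
    have "orbit = (\<lambda>i. x ^ i * u) ` {..<?e}"
    proof
      show "orbit \<subseteq> (\<lambda>i. x ^ i * u) ` {..<?e}"
      proof
        fix y assume "y \<in> orbit"
        then obtain i where "y = x ^ i * u" unfolding orbit_def by blast
        then have "y = x ^ (i mod ?e) * u"
          using power_mod_eq_if_power_eq_1[OF mult_order(2)[OF assms(1)]] by simp
        moreover have "i mod ?e < ?e" using e' by simp
        ultimately show "y \<in> (\<lambda>i. x ^ i * u) ` {..<?e}" by blast
      qed
    qed (auto simp: orbit_def)
    moreover have "inj_on (\<lambda>i. x ^ i * u) {..<?e}"
    proof (rule inj_onI)
      fix i j assume "i \<in> {..<?e}" "j \<in> {..<?e}" "x ^ i * u = x ^ j * u"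
      then show "i = j"
        using \<open>u \<noteq> 0\<close> inj_onD[OF inj_on_power_mult_order[OF assms(1)]] by simp
    qed
    ultimately have card_orbit: "card orbit = ?e" by (simp add: card_image)
    have "x * y \<in> S - orbit" if "y \<in> S - orbit" for y
    proof -
      have "y \<in> orbit" if "x * y = x ^ i * u" for i
      proof -
        have "y = x ^ e' * x * y"
          using mult_order(2)[OF assms(1)] by (simp add: e' mult.commute)
        also have "\<dots> = x ^ (e' + i) * u" using that by (simp add: mult.assoc power_add)
        finally show ?thesis unfolding orbit_def by blast
      qed
      then show ?thesis using that less.prems(2) unfolding orbit_def by blast
    qed
    moreover have "card (S - orbit) < card S"
      using \<open>orbit \<subseteq> S\<close> card_orbit e' \<open>S \<noteq> {}\<close>
      by (simp add: card_Diff_subset card_gt_0_iff)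
    ultimately have "?e dvd card (S - orbit)"
      using less.hyps less.prems(1) by blast
    moreover have "card S = card (S - orbit) + ?e"
      using \<open>orbit \<subseteq> S\<close> card_orbit card_mono[of S orbit] by (simp add: card_Diff_subset)
    ultimately show ?thesis by simp
  qed simp
qed

locale scaling_equivariant =
  fixes W :: "'a::{field,finite} \<Rightarrow> 'b" and \<sigma> :: "'b \<Rightarrow> 'b" and c :: 'a
  assumes c_nonzero: "c \<noteq> 0"
    and sigma_W: "\<sigma> (W u) = W (c * u)"
begin

definition fibre :: "'b \<Rightarrow> 'a set" where
  "fibre B = {u. u \<noteq> 0 \<and> W u = B}"

lemma funpow_W: "(\<sigma> ^^ n) (W u) = W (c ^ n * u)"
  by (induction n) (simp_all add: sigma_W mult.assoc)

lemma funpow_fixes_range: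
  assumes "c ^ n = 1" "B \<in> range W"
  shows "(\<sigma> ^^ n) B = B"
  using assms by (auto simp: funpow_W)

lemma inj_on_range: "inj_on \<sigma> (range W)"
proof (rule inj_onI, clarify)
  fix u v assume eq: "\<sigma> (W u) = \<sigma> (W v)"
  obtain e where e: "mult_order c = Suc e"
    using mult_order(1)[OF c_nonzero] gr0_implies_Suc by blast
  note periodic = funpow_fixes_range[OF mult_order(2)[OF c_nonzero], unfolded e]
  have "W u = (\<sigma> ^^ Suc e) (W u)" using periodic by simp
  also have "\<dots> = (\<sigma> ^^ e) (\<sigma> (W v))" by (simp only: funpow_Suc_right comp_def eq)
  also have "\<dots> = W v" using periodic by (simp only: funpow_Suc_right comp_def [symmetric]) simp
  finally show "W u = W v" .
qed

lemma fibre_sigma: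
  assumes "B \<in> range W"
  shows "fibre (\<sigma> B) = (\<lambda>u. c * u) ` fibre B"
proof
  show "(\<lambda>u. c * u) ` fibre B \<subseteq> fibre (\<sigma> B)"
    using c_nonzero by (auto simp: fibre_def sigma_W)
  show "fibre (\<sigma> B) \<subseteq> (\<lambda>u. c * u) ` fibre B"
  proof
    fix u assume "u \<in> fibre (\<sigma> B)"
    then have "u \<noteq> 0" "\<sigma> (W (u / c)) = \<sigma> B"
      using c_nonzero by (simp_all add: fibre_def sigma_W)
    then have "W (u / c) = B" using inj_onD[OF inj_on_range] assms by blast
    then show "u \<in> (\<lambda>u. c * u) ` fibre B"
      using \<open>u \<noteq> 0\<close> c_nonzero by (auto simp: fibre_def intro: image_eqI [of _ _ "u / c"])
  qed
qed

lemma card_fibre_funpow: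
  assumes "B \<in> range W"
  shows "card (fibre ((\<sigma> ^^ n) B)) = card (fibre B)"
proof (induction n)
  case (Suc n)
  have "(\<sigma> ^^ n) B \<in> range W" using assms by (auto simp: funpow_W)
  then have "card (fibre ((\<sigma> ^^ Suc n) B))
      = card ((\<lambda>u. c * u) ` fibre ((\<sigma> ^^ n) B))"
    by (simp add: fibre_sigma)
  also have "\<dots> = card (fibre ((\<sigma> ^^ n) B))"
    using c_nonzero by (intro card_image inj_onI) simp
  finally show ?case using Suc by simp
qed simp

lemma mult_order_dvd_card_fibre:
  assumes "(\<sigma> ^^ k) B = B"
  shows "mult_order (c ^ k) dvd card (fibre B)"
proof (rule mult_order_dvd_card_invariant)
  show "\<forall>u\<in>fibre B. c ^ k * u \<in> fibre B"
    using assms c_nonzero by (auto simp: fibre_def simp flip: funpow_W)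
qed (use c_nonzero in \<open>simp_all add: fibre_def\<close>)

definition period :: nat where
  "period = (LEAST n. 0 < n \<and> (\<forall>B\<in>W ` (UNIV - {0}). (\<sigma> ^^ n) B = B))"

lemma period_dvd:
  assumes "0 < n" "c ^ n = 1"
  shows "0 < period" "\<forall>B\<in>W ` (UNIV - {0}). (\<sigma> ^^ period) B = B" "period dvd n"
proof -
  have "\<forall>B\<in>W ` (UNIV - {0}). (\<sigma> ^^ n) B = B"
    using funpow_fixes_range[OF assms(2)] by blast
  from least_common_period_dvd[OF assms(1) this]
  show "0 < period" "\<forall>B\<in>W ` (UNIV - {0}). (\<sigma> ^^ period) B = B" "period dvd n"
    unfolding period_def by blast+
qed

context
  fixes k :: nat and A :: "nat \<Rightarrow> 'b"
  assumes k: "0 < k"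
    and inj: "inj_on A {..<k}"
    and in_image: "\<forall>i<k. A i \<in> W ` (UNIV - {0})"
    and cycle: "\<forall>i<k. \<sigma> (A i) = A ((i + 1) mod k)"
begin

lemma funpow_cycle: "(\<sigma> ^^ n) (A 0) = A (n mod k)"
  by (rule funpow_cyclic_sequence [OF k cycle])

lemma cycle_length_dvd_period: "k dvd period"
proof -
  have "inj_on (\<lambda>i. (\<sigma> ^^ i) (A 0)) {..<k}"
    unfolding funpow_cycle using inj by (auto simp: inj_on_def)
  moreover have "(\<sigma> ^^ k) (A 0) = A 0" using funpow_cycle[of k] by simp
  moreover have "(\<sigma> ^^ period) (A 0) = A 0"
    using period_dvd[OF mult_order[OF c_nonzero]] in_image k by blast
  ultimately show ?thesis by (rule funpow_cycle_length_dvd [OF k])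
qed

lemma card_fibre_cycle:
  assumes "i < k"
  shows "card (fibre (A i)) = card (fibre (A 0))"
proof -
  have "A 0 \<in> range W" using in_image k by blast
  then show ?thesis using card_fibre_funpow[of "A 0" i] funpow_cycle[of i] assms by simp
qed

lemma period_div_cycle_length_dvd_card_fibre: "period div k dvd card (fibre (A 0))"
proof -
  define e where "e = mult_order (c ^ k)"
  have "0 < e" "c ^ (k * e) = 1"
    using mult_order[of "c ^ k"] c_nonzero by (simp_all add: e_def power_mult)
  then have "period dvd k * e" using period_dvd[of "k * e"] k by simp
  then have "period div k dvd e" using cycle_length_dvd_period k by (auto elim!: dvdE)
  also have "e dvd card (fibre (A 0))"
    unfolding e_def by (rule mult_order_dvd_card_fibre) (simp add: funpow_cycle)
  finally show ?thesis .
qed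

end

end

theorem lemma2p3:
  fixes T :: "'a::{field,finite} itself"
    and s g k :: nat and A :: "nat \<Rightarrow> complex"
  assumes "0 < s"
    and "coprime s (CARD('a) - 1)"
    and "residue_primroot CHAR('a) g"
    and "0 < k"
    and "inj_on A {..<k}"
    and "\<forall>i<k. A i \<in> Wset T s"
    and "\<forall>i<k. gal_sigma CHAR('a) g (A i) = A ((i + 1) mod k)"
  shows "k dvd tau_order T s g
    \<and> (\<forall>i<k. NA T s (A i) = NA T s (A 0))
    \<and> (tau_order T s g div k) dvd NA T s (A 0)"
proof -
  obtain c :: 'a where "c \<noteq> 0" and "\<forall>u. gal_sigma CHAR('a) g (Wsum s u) = Wsum s (c * u)"
    using gal_sigma_Wsum[OF assms(2)] assms(3) by (auto simp: residue_primroot_def)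
  then interpret scaling_equivariant "Wsum s" "gal_sigma CHAR('a) g" c
    by unfold_locales simp_all
  have tau: "tau_order T s g = period" unfolding tau_order_def period_def Wset_def ..
  have NA: "NA T s B = card (fibre B)" for B unfolding NA_def fibre_def ..
  note cycle = assms(4,5) assms(6) [unfolded Wset_def] assms(7)
  show ?thesis
    unfolding tau NA
    using cycle_length_dvd_period[OF cycle] card_fibre_cycle[OF cycle]
      period_div_cycle_length_dvd_card_fibre[OF cycle]
    by blast
qed

end
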